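(* For integers $m\ge1$ and $0\le k\le m$, the circle-valued Morse function $f\colon K_{m,k}\to S^1$ induces a short exact sequence $1\to F_{m+k}\to G_{m,k}\to\mathbb Z\to1$, where $F_{m+k}$ is a free group of rank $m+k$ (and the map $G_{m,k}\to\mathbb Z$ sends every generator $a_i$ to a fixed generator of $\mathbb Z$).
   Context: $G_{m,k}=\langle a_1,\dots,a_{m+k+1}\mid [a_i,a_{i+1}]=1\ (1\le i\le m),\ a_{m+j+1}^{-1}a_ja_{m+j+1}=a_{m+j}\ (1\le j\le k)\rangle$, and $K_{m,k}$ is its presentation $2$–complex (one $0$–cell, one $1$–cell per generator, one square per relator). Give $S^1$ the CW structure with one $0$–cell and one $1$–cell; $f$ sends the $0$–cell of $K_{m,k}$ to the $0$–cell of $S^1$, maps each $1$–cell homeomorphically onto the $1$–cell of $S^1$ (in its orientation), and extends linearly over the square $2$–cells (so that its lift to universal covers is a Morse function whose value on each square is affine). *)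

theory Defs
  imports "HOL-Algebra.Algebra"
begin

text \<open>Words in generators indexed by naturals: a letter (i, True) stands for a_i,
  and (i, False) for a_i inverse.\<close>

type_synonym letter = "nat \<times> bool"
type_synonym word = "letter list"

definition inv_word :: "word \<Rightarrow> word" where
  "inv_word w = rev (map (\<lambda>(i, b). (i, \<not> b)) w)"

definition words_over :: "nat set \<Rightarrow> word set" where
  "words_over A = {w. \<forall>x \<in> set w. fst x \<in> A}"

inductive pres_eq :: "nat set \<Rightarrow> word set \<Rightarrow> word \<Rightarrow> word \<Rightarrow> bool"
  for A :: "nat set" and R :: "word set" where
  pres_refl: "pres_eq A R w w"
| pres_sym: "pres_eq A R v w \<Longrightarrow> pres_eq A R w v"
| pres_trans: "pres_eq A R u v \<Longrightarrow> pres_eq A R v w \<Longrightarrow> pres_eq A R u w"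
| pres_cancel: "i \<in> A \<Longrightarrow> pres_eq A R (u @ [(i, b), (i, \<not> b)] @ v) (u @ v)"
| pres_rel: "r \<in> R \<Longrightarrow> pres_eq A R (u @ r @ v) (u @ v)"

definition pres_class :: "nat set \<Rightarrow> word set \<Rightarrow> word \<Rightarrow> word set" where
  "pres_class A R w = {v \<in> words_over A. pres_eq A R w v}"

definition pres_mult :: "nat set \<Rightarrow> word set \<Rightarrow> word set \<Rightarrow> word set \<Rightarrow> word set" where
  "pres_mult A R U W = {v \<in> words_over A. \<exists>x\<in>U. \<exists>y\<in>W. pres_eq A R (x @ y) v}"

definition presented_group :: "nat set \<Rightarrow> word set \<Rightarrow> word set monoid" where
  "presented_group A R =
    \<lparr>carrier = pres_class A R ` words_over A,
     monoid.mult = pres_mult A R,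
     one = pres_class A R []\<rparr>"

definition pres_gen :: "nat set \<Rightarrow> word set \<Rightarrow> nat \<Rightarrow> word set" where
  "pres_gen A R i = pres_class A R [(i, True)]"

definition free_group_rank :: "nat \<Rightarrow> word set monoid" where
  "free_group_rank n = presented_group {1..n} {}"

text \<open>Commutator [a_i, a_{i+1}] = a_i^{-1} a_{i+1}^{-1} a_i a_{i+1};
  the relation a_{m+j+1}^{-1} a_j a_{m+j+1} = a_{m+j} becomes the relator
  a_{m+j+1}^{-1} a_j a_{m+j+1} a_{m+j}^{-1}.\<close>

definition G_gens :: "nat \<Rightarrow> nat \<Rightarrow> nat set" where
  "G_gens m k = {1..m+k+1}"

definition G_rels :: "nat \<Rightarrow> nat \<Rightarrow> word set" where
  "G_rels m k =
     {[(i, False), (i+1, False), (i, True), (i+1, True)] | i. 1 \<le> i \<and> i \<le> m}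
   \<union> {[(m+j+1, False), (j, True), (m+j+1, True), (m+j, False)] | j. 1 \<le> j \<and> j \<le> k}"

definition G_mk :: "nat \<Rightarrow> nat \<Rightarrow> word set monoid" where
  "G_mk m k = presented_group (G_gens m k) (G_rels m k)"

end

theory Submission
  imports Defs
begin

(* With t = a_1 and b_i = a_i t^-1, every defining relation of G_{m,k} says that conjugation
   by t maps b_i to a word in the b_j.  This defines an automorphism alpha of the free group F
   on b_2, ..., b_(m+k+1), and a_i |-> (b_i, 1) is an isomorphism of G_{m,k} onto the
   semidirect product F x| Z with 1 acting by alpha, inverse to (x, n) |-> x t^n. *)

lemma words_over_append [simp]:
  "u @ v \<in> words_over A \<longleftrightarrow> u \<in> words_over A \<and> v \<in> words_over A"
  by (auto simp: words_over_def)

lemma words_over_Cons [simp]: "l # v \<in> words_over A \<longleftrightarrow> fst l \<in> A \<and> v \<in> words_over A"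
  by (auto simp: words_over_def)

lemma words_over_Nil [simp]: "[] \<in> words_over A"
  by (auto simp: words_over_def)

lemma inv_word_Nil [simp]: "inv_word [] = []"
  by (simp add: inv_word_def)

lemma inv_word_Cons: "inv_word ((i, b) # w) = inv_word w @ [(i, \<not> b)]"
  by (simp add: inv_word_def)

lemma words_over_inv_word [simp]: "w \<in> words_over A \<Longrightarrow> inv_word w \<in> words_over A"
  by (auto simp: words_over_def inv_word_def)

lemma pres_eq_context: "pres_eq A R u v \<Longrightarrow> pres_eq A R (x @ u @ y) (x @ v @ y)"
proof (induction rule: pres_eq.induct)
  case (pres_cancel i u b v)
  then show ?case using pres_eq.pres_cancel[of i A R "x @ u" b "v @ y"] by simp
next
  case (pres_rel r u v)
  then show ?case using pres_eq.pres_rel[of r R A "x @ u" "v @ y"] by simp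
qed (blast intro: pres_eq.intros)+

lemma pres_eq_append:
  assumes "pres_eq A R u u'" and "pres_eq A R v v'"
  shows "pres_eq A R (u @ v) (u' @ v')"
proof -
  have "pres_eq A R ([] @ u @ v) ([] @ u' @ v)" using assms(1) by (rule pres_eq_context)
  moreover have "pres_eq A R (u' @ v @ []) (u' @ v' @ [])" using assms(2) by (rule pres_eq_context)
  ultimately show ?thesis by (auto intro: pres_eq.pres_trans)
qed

lemma pres_eq_inv_word_append: "w \<in> words_over A \<Longrightarrow> pres_eq A R (inv_word w @ w) []"
proof (induction w)
  case Nil
  then show ?case by (simp add: pres_eq.pres_refl)
next
  case (Cons l w)
  obtain i b where l: "l = (i, b)" by force
  have "i \<in> A" using Cons l by simp
  then have "pres_eq A R (inv_word w @ [(i, \<not> b), (i, \<not> \<not> b)] @ w) (inv_word w @ w)"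
    by (rule pres_eq.pres_cancel)
  then have "pres_eq A R (inv_word (l # w) @ l # w) (inv_word w @ w)"
    by (simp add: l inv_word_Cons)
  then show ?case using Cons by (auto intro: pres_eq.pres_trans)
qed

lemma pres_class_self: "w \<in> words_over A \<Longrightarrow> w \<in> pres_class A R w"
  by (simp add: pres_class_def pres_eq.pres_refl)

lemma pres_class_eq: "pres_eq A R u v \<Longrightarrow> pres_class A R u = pres_class A R v"
  unfolding pres_class_def by (blast intro: pres_eq.pres_trans pres_eq.pres_sym)

lemma pres_mult_pres_class:
  assumes "x \<in> words_over A" and "y \<in> words_over A"
  shows "pres_mult A R (pres_class A R x) (pres_class A R y) = pres_class A R (x @ y)"
proof
  show "pres_mult A R (pres_class A R x) (pres_class A R y) \<subseteq> pres_class A R (x @ y)"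
    unfolding pres_mult_def pres_class_def by (blast intro: pres_eq_append pres_eq.pres_trans)
  show "pres_class A R (x @ y) \<subseteq> pres_mult A R (pres_class A R x) (pres_class A R y)"
    using pres_class_self[OF assms(1)] pres_class_self[OF assms(2)]
    unfolding pres_mult_def by (auto simp: pres_class_def)
qed

lemma presented_group_simps:
  "carrier (presented_group A R) = pres_class A R ` words_over A"
  "monoid.mult (presented_group A R) = pres_mult A R"
  "one (presented_group A R) = pres_class A R []"
  by (simp_all add: presented_group_def)

lemma pres_class_in_carrier: "w \<in> words_over A \<Longrightarrow> pres_class A R w \<in> carrier (presented_group A R)"
  by (simp add: presented_group_simps)

lemma mult_presented_group:
  "x \<in> words_over A \<Longrightarrow> y \<in> words_over A \<Longrightarrow>
   pres_class A R x \<otimes>\<^bsub>presented_group A R\<^esub> pres_class A R y = pres_class A R (x @ y)"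
  by (simp add: presented_group_simps pres_mult_pres_class)

lemma group_presented_group: "group (presented_group A R)"
proof (rule groupI)
  let ?G = "presented_group A R"
  fix x assume "x \<in> carrier ?G"
  then obtain w where w: "w \<in> words_over A" "x = pres_class A R w"
    by (auto simp: presented_group_simps)
  then have "pres_class A R (inv_word w) \<otimes>\<^bsub>?G\<^esub> x = \<one>\<^bsub>?G\<^esub>"
    by (simp add: mult_presented_group presented_group_simps(3) pres_class_eq pres_eq_inv_word_append)
  then show "\<exists>y\<in>carrier ?G. y \<otimes>\<^bsub>?G\<^esub> x = \<one>\<^bsub>?G\<^esub>"
    using w by (auto simp: presented_group_simps)
qed (auto simp: presented_group_simps pres_mult_pres_class)

lemma pres_gen_in_carrier: "i \<in> A \<Longrightarrow> pres_gen A R i \<in> carrier (presented_group A R)"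
  by (simp add: pres_gen_def pres_class_in_carrier)

lemma inv_pres_gen:
  assumes "i \<in> A"
  shows "inv\<^bsub>presented_group A R\<^esub> pres_gen A R i = pres_class A R [(i, False)]"
proof (rule group.inv_equality[OF group_presented_group])
  show "pres_class A R [(i, False)] \<otimes>\<^bsub>presented_group A R\<^esub> pres_gen A R i = \<one>\<^bsub>presented_group A R\<^esub>"
    using assms pres_eq.pres_cancel[of i A R "[]" False "[]"]
    by (simp add: pres_gen_def mult_presented_group presented_group_simps(3) pres_class_eq)
qed (use assms in \<open>simp_all add: pres_gen_in_carrier pres_class_in_carrier\<close>)

lemma pres_class_Cons:
  assumes "i \<in> A" and "w \<in> words_over A"
  shows "pres_class A R ((i, b) # w) =
    (if b then pres_gen A R i else inv\<^bsub>presented_group A R\<^esub> pres_gen A R i)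
      \<otimes>\<^bsub>presented_group A R\<^esub> pres_class A R w"
  using assms mult_presented_group[of "[(i, b)]" A w R]
  by (cases b) (simp_all add: inv_pres_gen pres_gen_def[symmetric])

lemma pres_class_relator: "r \<in> R \<Longrightarrow> pres_class A R r = \<one>\<^bsub>presented_group A R\<^esub>"
  using pres_eq.pres_rel[of r R A "[]" "[]"] by (simp add: pres_class_eq presented_group_simps)

definition eval_letter :: "('b, 'c) monoid_scheme \<Rightarrow> nat set \<Rightarrow> (nat \<Rightarrow> 'b) \<Rightarrow> letter \<Rightarrow> 'b" where
  "eval_letter H A f l =
    (if fst l \<in> A then (if snd l then f (fst l) else inv\<^bsub>H\<^esub> f (fst l)) else \<one>\<^bsub>H\<^esub>)"

fun eval_word :: "('b, 'c) monoid_scheme \<Rightarrow> nat set \<Rightarrow> (nat \<Rightarrow> 'b) \<Rightarrow> word \<Rightarrow> 'b" where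
  "eval_word H A f [] = \<one>\<^bsub>H\<^esub>"
| "eval_word H A f (l # w) = eval_letter H A f l \<otimes>\<^bsub>H\<^esub> eval_word H A f w"

definition pres_lift :: "('b, 'c) monoid_scheme \<Rightarrow> nat set \<Rightarrow> word set \<Rightarrow> (nat \<Rightarrow> 'b) \<Rightarrow> word set \<Rightarrow> 'b"
  where "pres_lift H A R f U = eval_word H A f (SOME w. w \<in> U)"

lemma eval_word_pres_gen:
  "w \<in> words_over A \<Longrightarrow>
   eval_word (presented_group A R) A (pres_gen A R) w = pres_class A R w"
proof (induction w)
  case Nil
  then show ?case by (simp add: presented_group_simps)
next
  case (Cons l w)
  then show ?case by (cases l) (simp add: eval_letter_def pres_class_Cons)
qed

context group
begin

lemma eval_letter_closed: "\<forall>i\<in>A. f i \<in> carrier G \<Longrightarrow> eval_letter G A f l \<in> carrier G"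
  by (auto simp: eval_letter_def)

lemma eval_word_closed: "\<forall>i\<in>A. f i \<in> carrier G \<Longrightarrow> eval_word G A f w \<in> carrier G"
  by (induction w) (auto simp: eval_letter_closed)

lemma eval_word_append:
  "\<forall>i\<in>A. f i \<in> carrier G \<Longrightarrow> eval_word G A f (u @ v) = eval_word G A f u \<otimes> eval_word G A f v"
  by (induction u) (auto simp: eval_letter_closed eval_word_closed m_assoc)

lemma eval_word_pres_eq:
  assumes f: "\<forall>i\<in>A. f i \<in> carrier G" and R: "\<forall>r\<in>R. eval_word G A f r = \<one>"
  shows "pres_eq A R u v \<Longrightarrow> eval_word G A f u = eval_word G A f v"
proof (induction rule: pres_eq.induct)
  case (pres_cancel i u b v)
  then have "eval_word G A f [(i, b), (i, \<not> b)] = \<one>"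
    using f by (cases b) (auto simp: eval_letter_def)
  then show ?case using f by (simp only: eval_word_append) (simp add: eval_word_closed)
next
  case (pres_rel r u v)
  then show ?case using f R by (simp only: eval_word_append) (simp add: eval_word_closed)
qed auto

context
  fixes A :: "nat set" and R :: "word set" and f :: "nat \<Rightarrow> 'a"
  assumes gens_closed: "\<forall>i\<in>A. f i \<in> carrier G"
    and relators_one: "\<forall>r\<in>R. eval_word G A f r = \<one>"
begin

lemma pres_lift_pres_class:
  assumes "w \<in> words_over A"
  shows "pres_lift G A R f (pres_class A R w) = eval_word G A f w"
proof -
  have "(SOME v. v \<in> pres_class A R w) \<in> pres_class A R w"
    using pres_class_self[OF assms] by (rule someI)
  then have "pres_eq A R w (SOME v. v \<in> pres_class A R w)"
    by (simp add: pres_class_def)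
  then show ?thesis
    unfolding pres_lift_def using eval_word_pres_eq[OF gens_closed relators_one] by metis
qed

lemma pres_lift_hom: "pres_lift G A R f \<in> hom (presented_group A R) G"
proof (rule homI)
  fix x assume "x \<in> carrier (presented_group A R)"
  then obtain w where "w \<in> words_over A" "x = pres_class A R w"
    by (auto simp: presented_group_simps)
  then show "pres_lift G A R f x \<in> carrier G"
    by (simp add: pres_lift_pres_class eval_word_closed[OF gens_closed])
next
  fix x y assume "x \<in> carrier (presented_group A R)" "y \<in> carrier (presented_group A R)"
  then obtain u v where "u \<in> words_over A" "x = pres_class A R u"
      and "v \<in> words_over A" "y = pres_class A R v"
    by (auto simp: presented_group_simps)
  then show "pres_lift G A R f (x \<otimes>\<^bsub>presented_group A R\<^esub> y) = pres_lift G A R f x \<otimes> pres_lift G A R f y"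
    by (simp add: mult_presented_group pres_lift_pres_class eval_word_append[OF gens_closed])
qed

lemma pres_lift_pres_gen: "i \<in> A \<Longrightarrow> pres_lift G A R f (pres_gen A R i) = f i"
  using pres_lift_pres_class[of "[(i, True)]"] gens_closed
  by (simp add: pres_gen_def eval_letter_def)

end

lemma presented_group_hom_eq:
  assumes h1: "h1 \<in> hom (presented_group A R) G" and h2: "h2 \<in> hom (presented_group A R) G"
    and gens: "\<forall>i\<in>A. h1 (pres_gen A R i) = h2 (pres_gen A R i)"
    and x: "x \<in> carrier (presented_group A R)"
  shows "h1 x = h2 x"
proof -
  interpret H1: group_hom "presented_group A R" G h1
    by (intro group_hom.intro group_presented_group group_hom_axioms.intro h1) unfold_locales
  interpret H2: group_hom "presented_group A R" G h2
    by (intro group_hom.intro group_presented_group group_hom_axioms.intro h2) unfold_locales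
  have "h1 (pres_class A R w) = h2 (pres_class A R w)" if "w \<in> words_over A" for w
    using that
  proof (induction w)
    case Nil
    then show ?case using H1.hom_one H2.hom_one by (simp add: presented_group_simps)
  next
    case (Cons l w)
    obtain i b where l: "l = (i, b)" by force
    then have "i \<in> A" "w \<in> words_over A" using Cons by auto
    with Cons.IH gens show ?case
      by (simp add: l pres_class_Cons pres_class_in_carrier pres_gen_in_carrier)
  qed
  then show ?thesis using x by (auto simp: presented_group_simps)
qed

end

lemma (in group) commutator_eq_one_iff:
  assumes "x \<in> carrier G" and "y \<in> carrier G"
  shows "inv x \<otimes> (inv y \<otimes> (x \<otimes> y)) = \<one> \<longleftrightarrow> y \<otimes> x = x \<otimes> y"
proof -
  have "inv x \<otimes> (inv y \<otimes> (x \<otimes> y)) = \<one> \<longleftrightarrow> inv y \<otimes> (x \<otimes> y) = x"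
    using assms by (simp add: inv_solve_left')
  also have "\<dots> \<longleftrightarrow> y \<otimes> x = x \<otimes> y"
    using assms by (auto simp: inv_solve_left')
  finally show ?thesis using assms by simp
qed

lemma (in group) conjugate_eq_one_iff:
  assumes "x \<in> carrier G" and "y \<in> carrier G" and "z \<in> carrier G"
  shows "inv z \<otimes> (x \<otimes> (z \<otimes> inv y)) = \<one> \<longleftrightarrow> z \<otimes> y = x \<otimes> z"
proof -
  have "inv z \<otimes> (x \<otimes> z \<otimes> inv y) = \<one> \<longleftrightarrow> x \<otimes> z \<otimes> inv y = z"
    using assms by (simp add: inv_solve_left')
  also have "\<dots> \<longleftrightarrow> z \<otimes> y = x \<otimes> z"
    using assms by (auto simp: inv_solve_right')
  finally show ?thesis using assms by (simp add: m_assoc)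
qed

lemma (in group) mult_inv_cancel_left [simp]:
  "x \<in> carrier G \<Longrightarrow> y \<in> carrier G \<Longrightarrow> x \<otimes> (inv x \<otimes> y) = y"
  by (simp add: m_assoc[symmetric])

lemma (in group) inv_mult_cancel_left [simp]:
  "x \<in> carrier G \<Longrightarrow> y \<in> carrier G \<Longrightarrow> inv x \<otimes> (x \<otimes> y) = y"
  by (simp add: m_assoc[symmetric])

lemma (in group) conjugation_hom: "g \<in> carrier G \<Longrightarrow> (\<lambda>x. g \<otimes> x \<otimes> inv g) \<in> hom G G"
  by (rule homI) (simp_all add: m_assoc)

definition conj_target :: "nat \<Rightarrow> nat \<Rightarrow> nat" where
  "conj_target m i = (if i \<le> m + 1 then i - 1 else i - m - 1)"

lemma conj_target_less: "2 \<le> i \<Longrightarrow> conj_target m i < i"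
  by (auto simp: conj_target_def)

lemma conj_target_pos: "2 \<le> i \<Longrightarrow> 1 \<le> conj_target m i"
  by (auto simp: conj_target_def)

lemma mem_G_gens [simp]: "i \<in> G_gens m k \<longleftrightarrow> 1 \<le> i \<and> i \<le> m + k + 1"
  by (simp add: G_gens_def)

lemma G_rels_words_over: "r \<in> G_rels m k \<Longrightarrow> r \<in> words_over (G_gens m k)"
  by (auto simp: G_rels_def)

lemma (in group) G_rels_eval_one_iff:
  assumes f: "\<forall>i\<in>G_gens m k. f i \<in> carrier G"
  shows "(\<forall>r\<in>G_rels m k. eval_word G (G_gens m k) f r = \<one>) \<longleftrightarrow>
         (\<forall>i\<in>{2..m+k+1}. f i \<otimes> f (i - 1) = f (conj_target m i) \<otimes> f i)"
proof -
  let ?rel = "\<lambda>i. f i \<otimes> f (i - 1) = f (conj_target m i) \<otimes> f i"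
  have commutator_iff:
    "eval_word G (G_gens m k) f [(i, False), (i+1, False), (i, True), (i+1, True)] = \<one>
       \<longleftrightarrow> ?rel (i + 1)" if "1 \<le> i" "i \<le> m" for i
  proof -
    have "f i \<in> carrier G" "f (i + 1) \<in> carrier G" using that f by auto
    then show ?thesis
      using that by (simp add: eval_letter_def conj_target_def commutator_eq_one_iff)
  qed
  have conjugate_iff:
    "eval_word G (G_gens m k) f [(m+j+1, False), (j, True), (m+j+1, True), (m+j, False)] = \<one>
       \<longleftrightarrow> ?rel (m + j + 1)" if "1 \<le> j" "j \<le> k" for j
  proof -
    have "f j \<in> carrier G" "f (m + j) \<in> carrier G" "f (m + j + 1) \<in> carrier G"
      using that f by auto
    then show ?thesis
      using that by (simp add: eval_letter_def conj_target_def conjugate_eq_one_iff)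
  qed
  show ?thesis
  proof
    assume rels: "\<forall>r\<in>G_rels m k. eval_word G (G_gens m k) f r = \<one>"
    show "\<forall>i\<in>{2..m+k+1}. ?rel i"
    proof
      fix i assume i: "i \<in> {2..m+k+1}"
      show "?rel i"
      proof (cases "i \<le> m + 1")
        case True
        define j where "j = i - 1"
        have j: "1 \<le> j" "j \<le> m" "i = j + 1" using i True by (auto simp: j_def)
        then have "[(j, False), (j+1, False), (j, True), (j+1, True)] \<in> G_rels m k"
          unfolding G_rels_def by blast
        then show ?thesis using rels commutator_iff[OF j(1,2)] j(3) by blast
      next
        case False
        define j where "j = i - m - 1"
        have j: "1 \<le> j" "j \<le> k" "i = m + j + 1" using i False by (auto simp: j_def)
        then have "[(m+j+1, False), (j, True), (m+j+1, True), (m+j, False)] \<in> G_rels m k"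
          unfolding G_rels_def by blast
        then show ?thesis using rels conjugate_iff[OF j(1,2)] j(3) by blast
      qed
    qed
  next
    assume rels: "\<forall>i\<in>{2..m+k+1}. ?rel i"
    show "\<forall>r\<in>G_rels m k. eval_word G (G_gens m k) f r = \<one>"
    proof
      fix r assume "r \<in> G_rels m k"
      then consider
          (commutator) i where "r = [(i, False), (i+1, False), (i, True), (i+1, True)]" "1 \<le> i" "i \<le> m"
        | (conjugate) j where "r = [(m+j+1, False), (j, True), (m+j+1, True), (m+j, False)]"
            "1 \<le> j" "j \<le> k"
        unfolding G_rels_def by blast
      then show "eval_word G (G_gens m k) f r = \<one>"
      proof cases
        case (commutator i)
        have "?rel (i + 1)" using commutator(2,3) by (intro rels[rule_format]) simp
        then show ?thesis unfolding commutator(1) using commutator_iff[OF commutator(2,3)] by blast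
      next
        case (conjugate j)
        have "?rel (m + j + 1)" using conjugate(2,3) by (intro rels[rule_format]) simp
        then show ?thesis unfolding conjugate(1) using conjugate_iff[OF conjugate(2,3)] by blast
      qed
    qed
  qed
qed

lemma hom_integer_group_onto:
  assumes "group G" and \<phi>: "\<phi> \<in> hom G integer_group" and "g \<in> carrier G" and "\<phi> g = 1"
  shows "\<phi> ` carrier G = carrier integer_group"
proof -
  have "z = \<phi> (g [^]\<^bsub>G\<^esub> z)" for z :: int
    using hom_int_pow[OF \<phi> \<open>g \<in> carrier G\<close> \<open>group G\<close> group_integer_group] \<open>\<phi> g = 1\<close> by simp
  then show ?thesis using \<open>group G\<close> \<open>g \<in> carrier G\<close> by (auto intro: group.int_pow_closed)
qed

lemma id_hom: "id \<in> hom G G"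
  by (rule iso_imp_homomorphism[OF id_iso])

lemma funpow_hom: "f \<in> hom G G \<Longrightarrow> f ^^ n \<in> hom G G"
  by (induction n) (auto intro: hom_compose id_hom)

definition aut_pow :: "('a \<Rightarrow> 'a) \<Rightarrow> ('a \<Rightarrow> 'a) \<Rightarrow> int \<Rightarrow> 'a \<Rightarrow> 'a" where
  "aut_pow \<alpha> \<beta> n = (if 0 \<le> n then \<alpha> ^^ nat n else \<beta> ^^ nat (- n))"

definition int_semidirect :: "('a, 'c) monoid_scheme \<Rightarrow> ('a \<Rightarrow> 'a) \<Rightarrow> ('a \<Rightarrow> 'a) \<Rightarrow> ('a \<times> int) monoid"
  where "int_semidirect F \<alpha> \<beta> =
    \<lparr>carrier = carrier F \<times> UNIV,
     monoid.mult = (\<lambda>(x, a) (y, b). (x \<otimes>\<^bsub>F\<^esub> aut_pow \<alpha> \<beta> a y, a + b)),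
     one = (\<one>\<^bsub>F\<^esub>, 0)\<rparr>"

locale group_aut = group F for F (structure) +
  fixes \<alpha> \<beta> :: "'a \<Rightarrow> 'a"
  assumes alpha_hom: "\<alpha> \<in> hom F F" and beta_hom: "\<beta> \<in> hom F F"
    and alpha_beta: "x \<in> carrier F \<Longrightarrow> \<alpha> (\<beta> x) = x"
    and beta_alpha: "x \<in> carrier F \<Longrightarrow> \<beta> (\<alpha> x) = x"
begin

abbreviation S where "S \<equiv> int_semidirect F \<alpha> \<beta>"

lemma aut_pow_hom: "aut_pow \<alpha> \<beta> n \<in> hom F F"
  by (simp add: aut_pow_def funpow_hom alpha_hom beta_hom)

lemma aut_pow_closed [simp]: "x \<in> carrier F \<Longrightarrow> aut_pow \<alpha> \<beta> n x \<in> carrier F"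
  using aut_pow_hom by (rule hom_in_carrier)

lemma aut_pow_mult:
  "x \<in> carrier F \<Longrightarrow> y \<in> carrier F \<Longrightarrow> aut_pow \<alpha> \<beta> n (x \<otimes> y) = aut_pow \<alpha> \<beta> n x \<otimes> aut_pow \<alpha> \<beta> n y"
  using aut_pow_hom by (rule hom_mult)

lemma aut_pow_one [simp]: "aut_pow \<alpha> \<beta> n \<one> = \<one>"
  using aut_pow_hom group_axioms group_axioms by (rule hom_one)

lemma aut_pow_0 [simp]: "aut_pow \<alpha> \<beta> 0 x = x"
  by (simp add: aut_pow_def)

lemma aut_pow_succ: "x \<in> carrier F \<Longrightarrow> aut_pow \<alpha> \<beta> (n + 1) x = \<alpha> (aut_pow \<alpha> \<beta> n x)"
proof (cases "0 \<le> n")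
  case True
  then have "nat (n + 1) = Suc (nat n)" by simp
  then show ?thesis using True by (simp add: aut_pow_def)
next
  case False
  assume x: "x \<in> carrier F"
  have "nat (- n) = Suc (nat (- (n + 1)))" using False by simp
  moreover have "(\<beta> ^^ nat (- (n + 1))) x \<in> carrier F"
    using x funpow_hom[OF beta_hom] by (rule hom_in_carrier[rotated])
  ultimately show ?thesis using False by (simp add: aut_pow_def alpha_beta)
qed

lemma aut_pow_pred: "x \<in> carrier F \<Longrightarrow> aut_pow \<alpha> \<beta> (n - 1) x = \<beta> (aut_pow \<alpha> \<beta> n x)"
  using aut_pow_succ[of x "n - 1"] by (simp add: beta_alpha)

lemma aut_pow_add: "x \<in> carrier F \<Longrightarrow> aut_pow \<alpha> \<beta> a (aut_pow \<alpha> \<beta> b x) = aut_pow \<alpha> \<beta> (a + b) x"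
proof (induction a rule: int_induct[where k = 0])
  case (step1 i)
  then show ?case using aut_pow_succ[of "aut_pow \<alpha> \<beta> b x" i] aut_pow_succ[of x "i + b"]
    by (simp add: algebra_simps)
next
  case (step2 i)
  then show ?case using aut_pow_pred[of "aut_pow \<alpha> \<beta> b x" i] aut_pow_pred[of x "i + b"]
    by (simp add: algebra_simps)
qed simp

lemma int_semidirect_simps:
  "carrier S = carrier F \<times> UNIV"
  "(x, a) \<otimes>\<^bsub>S\<^esub> (y, b) = (x \<otimes> aut_pow \<alpha> \<beta> a y, a + b)"
  "\<one>\<^bsub>S\<^esub> = (\<one>, 0)"
  by (simp_all add: int_semidirect_def)

lemma group_int_semidirect: "group S"
proof (rule groupI)
  fix p assume "p \<in> carrier S"
  then obtain x a where p: "p = (x, a)" "x \<in> carrier F" by (auto simp: int_semidirect_simps)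
  then have "(aut_pow \<alpha> \<beta> (- a) (inv x), - a) \<otimes>\<^bsub>S\<^esub> p = \<one>\<^bsub>S\<^esub>"
    by (simp add: int_semidirect_simps aut_pow_mult[symmetric] aut_pow_add)
  moreover have "(aut_pow \<alpha> \<beta> (- a) (inv x), - a) \<in> carrier S"
    using p by (simp add: int_semidirect_simps)
  ultimately show "\<exists>q\<in>carrier S. q \<otimes>\<^bsub>S\<^esub> p = \<one>\<^bsub>S\<^esub>" by blast
qed (auto simp: int_semidirect_simps aut_pow_mult aut_pow_add m_assoc add.assoc)

lemma snd_hom: "snd \<in> hom S integer_group"
  by (rule homI) (auto simp: int_semidirect_simps)

lemma kernel_snd_iso:
  assumes "group G" and \<psi>: "\<psi> \<in> hom G S" and inj: "inj_on \<psi> (carrier G)"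
    and onto: "\<forall>x\<in>carrier F. \<exists>g\<in>carrier G. \<psi> g = (x, 0)"
  shows "G\<lparr>carrier := kernel G integer_group (snd \<circ> \<psi>)\<rparr> \<cong> F"
proof -
  let ?K = "kernel G integer_group (snd \<circ> \<psi>)"
  have in_K: "g \<in> ?K \<longleftrightarrow> g \<in> carrier G \<and> \<psi> g = (fst (\<psi> g), 0)" for g
    by (auto simp: kernel_def prod_eq_iff)
  have fst_closed: "fst (\<psi> g) \<in> carrier F" if "g \<in> carrier G" for g
    using hom_in_carrier[OF \<psi> that] by (auto simp: int_semidirect_simps)
  have "fst \<circ> \<psi> \<in> iso (G\<lparr>carrier := ?K\<rparr>) F"
    unfolding iso_iff
  proof (intro conjI)
    show "fst \<circ> \<psi> \<in> hom (G\<lparr>carrier := ?K\<rparr>) F"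
    proof (rule homI)
      fix g h assume "g \<in> carrier (G\<lparr>carrier := ?K\<rparr>)" "h \<in> carrier (G\<lparr>carrier := ?K\<rparr>)"
      then have "g \<in> carrier G" "h \<in> carrier G" "\<psi> g = (fst (\<psi> g), 0)" "\<psi> h = (fst (\<psi> h), 0)"
        by (simp_all add: in_K)
      then have "\<psi> (g \<otimes>\<^bsub>G\<^esub> h) = (fst (\<psi> g), 0) \<otimes>\<^bsub>S\<^esub> (fst (\<psi> h), 0)"
        using hom_mult[OF \<psi>] by metis
      then show "(fst \<circ> \<psi>) (g \<otimes>\<^bsub>G\<lparr>carrier := ?K\<rparr>\<^esub> h) = (fst \<circ> \<psi>) g \<otimes> (fst \<circ> \<psi>) h"
        by (simp add: int_semidirect_simps)
    qed (simp add: in_K fst_closed)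
    show "(fst \<circ> \<psi>) ` carrier (G\<lparr>carrier := ?K\<rparr>) = carrier F"
    proof
      show "(fst \<circ> \<psi>) ` carrier (G\<lparr>carrier := ?K\<rparr>) \<subseteq> carrier F"
        using fst_closed by (auto simp: in_K)
      show "carrier F \<subseteq> (fst \<circ> \<psi>) ` carrier (G\<lparr>carrier := ?K\<rparr>)"
      proof
        fix x assume "x \<in> carrier F"
        then obtain g where "g \<in> carrier G" "\<psi> g = (x, 0)" using onto by blast
        then show "x \<in> (fst \<circ> \<psi>) ` carrier (G\<lparr>carrier := ?K\<rparr>)"
          by (auto simp: in_K intro!: image_eqI[of _ _ g])
      qed
    qed
    show "inj_on (fst \<circ> \<psi>) (carrier (G\<lparr>carrier := ?K\<rparr>))"
      using inj by (auto simp: in_K inj_on_def prod_eq_iff)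
  qed
  then show ?thesis by (rule is_isoI)
qed

end

locale G_mk_splitting =
  fixes m k :: nat
begin

(* A named constant, so that the simplifier's rewriting of 1 to Suc 0 cannot separate
   the generator set of Fr from the one in free_group_rank. *)
definition F_gens :: "nat set" where "F_gens = {1..m+k}"

lemma mem_F_gens [simp]: "j \<in> F_gens \<longleftrightarrow> 1 \<le> j \<and> j \<le> m + k"
  by (simp add: F_gens_def)

abbreviation Fr where "Fr \<equiv> presented_group F_gens {}"

sublocale Fr: group Fr
  by (rule group_presented_group)

abbreviation G where "G \<equiv> presented_group (G_gens m k) (G_rels m k)"

sublocale G: group G
  by (rule group_presented_group)

definition b :: "nat \<Rightarrow> word set" where
  "b i = (if 2 \<le> i then pres_gen F_gens {} (i - 1) else \<one>\<^bsub>Fr\<^esub>)"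

lemma b_le_1 [simp]: "i \<le> 1 \<Longrightarrow> b i = \<one>\<^bsub>Fr\<^esub>"
  by (simp add: b_def)

lemma b_closed [simp]: "i \<le> m + k + 1 \<Longrightarrow> b i \<in> carrier Fr"
proof (cases "2 \<le> i")
  case True
  assume "i \<le> m + k + 1"
  then have "i - 1 \<in> F_gens" using True by auto
  then show ?thesis using True by (simp add: b_def pres_gen_in_carrier del: mem_F_gens)
qed (simp add: b_def)

(* b i stands for a_i t^-1, where t = a_1.  By the relation a_i a_(i-1) = a_s a_i with
   s = conj_target m i, conjugation by t acts as
   t b_i t^-1 = t a_i t^-2 = b_s^-1 b_i (t b_(i-1) t^-1),
   which is the recursion defining alpha_gen; beta_gen is the inverse recursion. *)

function alpha_gen :: "nat \<Rightarrow> word set" where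
  "alpha_gen i = (if i \<le> 1 then \<one>\<^bsub>Fr\<^esub>
     else inv\<^bsub>Fr\<^esub> b (conj_target m i) \<otimes>\<^bsub>Fr\<^esub> b i \<otimes>\<^bsub>Fr\<^esub> alpha_gen (i - 1))"
  by auto
termination by (relation "measure id") auto

function beta_gen :: "nat \<Rightarrow> word set" where
  "beta_gen i = (if i \<le> 1 then \<one>\<^bsub>Fr\<^esub>
     else beta_gen (conj_target m i) \<otimes>\<^bsub>Fr\<^esub> b i \<otimes>\<^bsub>Fr\<^esub> inv\<^bsub>Fr\<^esub> b (i - 1))"
  by auto
termination by (relation "measure id") (auto simp: conj_target_less)

declare alpha_gen.simps [simp del] beta_gen.simps [simp del]

lemma alpha_gen_le_1 [simp]: "i \<le> 1 \<Longrightarrow> alpha_gen i = \<one>\<^bsub>Fr\<^esub>"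
  by (simp add: alpha_gen.simps)

lemma beta_gen_le_1 [simp]: "i \<le> 1 \<Longrightarrow> beta_gen i = \<one>\<^bsub>Fr\<^esub>"
  by (simp add: beta_gen.simps)

lemma alpha_gen_step:
  "2 \<le> i \<Longrightarrow> alpha_gen i = inv\<^bsub>Fr\<^esub> b (conj_target m i) \<otimes>\<^bsub>Fr\<^esub> b i \<otimes>\<^bsub>Fr\<^esub> alpha_gen (i - 1)"
  by (simp add: alpha_gen.simps[of i])

lemma beta_gen_step:
  "2 \<le> i \<Longrightarrow> beta_gen i = beta_gen (conj_target m i) \<otimes>\<^bsub>Fr\<^esub> b i \<otimes>\<^bsub>Fr\<^esub> inv\<^bsub>Fr\<^esub> b (i - 1)"
  by (simp add: beta_gen.simps[of i])

lemma alpha_gen_closed [simp]: "i \<le> m + k + 1 \<Longrightarrow> alpha_gen i \<in> carrier Fr"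
proof (induction i rule: less_induct)
  case (less i)
  then show ?case using conj_target_less[of i m] by (auto simp: alpha_gen.simps[of i])
qed

lemma beta_gen_closed [simp]: "i \<le> m + k + 1 \<Longrightarrow> beta_gen i \<in> carrier Fr"
proof (induction i rule: less_induct)
  case (less i)
  then show ?case using conj_target_less[of i m] by (auto simp: beta_gen.simps[of i])
qed

definition alpha :: "word set \<Rightarrow> word set" where
  "alpha = pres_lift Fr F_gens {} (\<lambda>j. alpha_gen (j + 1))"

definition beta :: "word set \<Rightarrow> word set" where
  "beta = pres_lift Fr F_gens {} (\<lambda>j. beta_gen (j + 1))"

lemma alpha_hom: "alpha \<in> hom Fr Fr"
  unfolding alpha_def by (rule Fr.pres_lift_hom) auto

lemma beta_hom: "beta \<in> hom Fr Fr"
  unfolding beta_def by (rule Fr.pres_lift_hom) auto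

lemma pres_gen_eq_b: "j \<in> F_gens \<Longrightarrow> pres_gen F_gens {} j = b (j + 1)"
  by (simp add: b_def)

lemma alpha_b: "1 \<le> i \<Longrightarrow> i \<le> m + k + 1 \<Longrightarrow> alpha (b i) = alpha_gen i"
proof (cases "i = 1")
  case True
  then show ?thesis using hom_one[OF alpha_hom Fr.group_axioms Fr.group_axioms] by simp
next
  case False
  assume "1 \<le> i" "i \<le> m + k + 1"
  then have "alpha (pres_gen F_gens {} (i - 1)) = alpha_gen (i - 1 + 1)"
    unfolding alpha_def using False \<open>1 \<le> i\<close> \<open>i \<le> m + k + 1\<close>
    by (intro Fr.pres_lift_pres_gen) auto
  then show ?thesis using False \<open>1 \<le> i\<close> by (simp add: b_def)
qed

lemma beta_b: "1 \<le> i \<Longrightarrow> i \<le> m + k + 1 \<Longrightarrow> beta (b i) = beta_gen i"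
proof (cases "i = 1")
  case True
  then show ?thesis using hom_one[OF beta_hom Fr.group_axioms Fr.group_axioms] by simp
next
  case False
  assume "1 \<le> i" "i \<le> m + k + 1"
  then have "beta (pres_gen F_gens {} (i - 1)) = beta_gen (i - 1 + 1)"
    unfolding beta_def using False \<open>1 \<le> i\<close> \<open>i \<le> m + k + 1\<close>
    by (intro Fr.pres_lift_pres_gen) auto
  then show ?thesis using False \<open>1 \<le> i\<close> by (simp add: b_def)
qed

sublocale alpha: group_hom Fr Fr alpha
  by unfold_locales (rule alpha_hom)

sublocale beta: group_hom Fr Fr beta
  by unfold_locales (rule beta_hom)

lemma alpha_beta_b: "1 \<le> i \<Longrightarrow> i \<le> m + k + 1 \<Longrightarrow> alpha (beta (b i)) = b i"
proof (induction i rule: less_induct)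
  case (less i)
  show ?case
  proof (cases "i = 1")
    case False
    then have i: "2 \<le> i" using less.prems by simp
    have \<sigma>: "1 \<le> conj_target m i" "conj_target m i < i" "conj_target m i \<le> m + k + 1"
      using conj_target_less[OF i, of m] conj_target_pos[OF i, of m] less.prems by auto
    have IH: "alpha (beta_gen (conj_target m i)) = b (conj_target m i)"
      using less.IH[of "conj_target m i"] less.prems \<sigma> beta_b[of "conj_target m i"] by simp
    have "alpha (beta (b i)) = alpha (beta_gen i)"
      using less.prems by (simp add: beta_b)
    also have "\<dots> = b (conj_target m i) \<otimes>\<^bsub>Fr\<^esub> alpha_gen i \<otimes>\<^bsub>Fr\<^esub> inv\<^bsub>Fr\<^esub> alpha_gen (i - 1)"
      using i less.prems \<sigma> IH by (simp add: beta_gen_step alpha_b)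
    also have "\<dots> = b i"
      using i less.prems b_closed[OF \<sigma>(3)] by (simp add: alpha_gen_step[OF i] Fr.m_assoc)
    finally show ?thesis .
  qed simp
qed

lemma beta_alpha_b: "1 \<le> i \<Longrightarrow> i \<le> m + k + 1 \<Longrightarrow> beta (alpha (b i)) = b i"
proof (induction i rule: less_induct)
  case (less i)
  show ?case
  proof (cases "i = 1")
    case False
    then have i: "2 \<le> i" using less.prems by simp
    have \<sigma>: "1 \<le> conj_target m i" "conj_target m i < i" "conj_target m i \<le> m + k + 1"
      using conj_target_less[OF i, of m] conj_target_pos[OF i, of m] less.prems by auto
    have IH: "beta (alpha_gen (i - 1)) = b (i - 1)"
      using less.IH[of "i - 1"] less.prems i alpha_b[of "i - 1"] by simp
    have "beta (alpha (b i)) = beta (alpha_gen i)"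
      using less.prems by (simp add: alpha_b)
    also have "\<dots> = inv\<^bsub>Fr\<^esub> beta_gen (conj_target m i) \<otimes>\<^bsub>Fr\<^esub> beta_gen i \<otimes>\<^bsub>Fr\<^esub> b (i - 1)"
      using i less.prems \<sigma> IH by (simp add: alpha_gen_step beta_b)
    also have "\<dots> = b i"
      using i less.prems beta_gen_closed[OF \<sigma>(3)] by (simp add: beta_gen_step[OF i] Fr.m_assoc)
    finally show ?thesis .
  qed simp
qed

lemma alpha_beta: "x \<in> carrier Fr \<Longrightarrow> alpha (beta x) = x"
  using Fr.presented_group_hom_eq[OF hom_compose[OF beta_hom alpha_hom] id_hom, of x]
  by (simp add: pres_gen_eq_b alpha_beta_b)

lemma beta_alpha: "x \<in> carrier Fr \<Longrightarrow> beta (alpha x) = x"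
  using Fr.presented_group_hom_eq[OF hom_compose[OF alpha_hom beta_hom] id_hom, of x]
  by (simp add: pres_gen_eq_b beta_alpha_b)

sublocale group_aut Fr alpha beta
  by unfold_locales (simp_all add: alpha_hom beta_hom alpha_beta beta_alpha)

definition a :: "nat \<Rightarrow> word set" where
  "a i = pres_gen (G_gens m k) (G_rels m k) i"

abbreviation t where "t \<equiv> a 1"

lemma a_closed [simp]: "1 \<le> i \<Longrightarrow> i \<le> m + k + 1 \<Longrightarrow> a i \<in> carrier G"
  by (simp add: a_def G_gens_def pres_gen_in_carrier)

lemma t_closed [simp]: "t \<in> carrier G"
  by simp

lemma a_rel: "2 \<le> i \<Longrightarrow> i \<le> m + k + 1 \<Longrightarrow> a i \<otimes>\<^bsub>G\<^esub> a (i - 1) = a (conj_target m i) \<otimes>\<^bsub>G\<^esub> a i"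
proof -
  have "\<forall>r\<in>G_rels m k. eval_word G (G_gens m k) (pres_gen (G_gens m k) (G_rels m k)) r = \<one>\<^bsub>G\<^esub>"
    by (simp add: eval_word_pres_gen G_rels_words_over pres_class_relator)
  then show "2 \<le> i \<Longrightarrow> i \<le> m + k + 1 \<Longrightarrow> ?thesis"
    by (subst (asm) G.G_rels_eval_one_iff) (auto simp: a_def pres_gen_in_carrier)
qed

definition incl :: "word set \<Rightarrow> word set" where
  "incl = pres_lift G F_gens {} (\<lambda>j. a (j + 1) \<otimes>\<^bsub>G\<^esub> inv\<^bsub>G\<^esub> t)"

lemma incl_hom: "incl \<in> hom Fr G"
  unfolding incl_def by (rule G.pres_lift_hom) auto

sublocale incl: group_hom Fr G incl
  by unfold_locales (rule incl_hom)

lemma incl_b: "1 \<le> i \<Longrightarrow> i \<le> m + k + 1 \<Longrightarrow> incl (b i) = a i \<otimes>\<^bsub>G\<^esub> inv\<^bsub>G\<^esub> t"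
proof (cases "i = 1")
  case False
  assume "1 \<le> i" "i \<le> m + k + 1"
  then have "incl (pres_gen F_gens {} (i - 1)) = a (i - 1 + 1) \<otimes>\<^bsub>G\<^esub> inv\<^bsub>G\<^esub> t"
    unfolding incl_def using False by (intro G.pres_lift_pres_gen) auto
  then show ?thesis using False \<open>1 \<le> i\<close> by (simp add: b_def)
qed simp

lemma incl_alpha_gen:
  "1 \<le> i \<Longrightarrow> i \<le> m + k + 1 \<Longrightarrow>
   incl (alpha_gen i) = t \<otimes>\<^bsub>G\<^esub> a i \<otimes>\<^bsub>G\<^esub> inv\<^bsub>G\<^esub> t \<otimes>\<^bsub>G\<^esub> inv\<^bsub>G\<^esub> t"
proof (induction i rule: less_induct)
  case (less i)
  show ?case
  proof (cases "i = 1")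
    case True
    then show ?thesis by (simp add: G.m_assoc)
  next
    case False
    then have i: "2 \<le> i" using less.prems by simp
    have \<sigma>: "1 \<le> conj_target m i" "conj_target m i \<le> m + k + 1"
      using conj_target_less[OF i, of m] conj_target_pos[OF i, of m] less.prems by auto
    have IH: "incl (alpha_gen (i - 1)) = t \<otimes>\<^bsub>G\<^esub> a (i - 1) \<otimes>\<^bsub>G\<^esub> inv\<^bsub>G\<^esub> t \<otimes>\<^bsub>G\<^esub> inv\<^bsub>G\<^esub> t"
      using less.IH[of "i - 1"] i less.prems by simp
    have "incl (alpha_gen i) = incl (inv\<^bsub>Fr\<^esub> b (conj_target m i)) \<otimes>\<^bsub>G\<^esub> incl (b i) \<otimes>\<^bsub>G\<^esub> incl (alpha_gen (i - 1))"
      using i less.prems \<sigma> by (simp add: alpha_gen_step[OF i])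
    also have "\<dots> = t \<otimes>\<^bsub>G\<^esub> (inv\<^bsub>G\<^esub> a (conj_target m i) \<otimes>\<^bsub>G\<^esub> (a i \<otimes>\<^bsub>G\<^esub> a (i - 1))) \<otimes>\<^bsub>G\<^esub> inv\<^bsub>G\<^esub> t \<otimes>\<^bsub>G\<^esub> inv\<^bsub>G\<^esub> t"
      using i less.prems \<sigma> IH by (simp add: incl_b G.inv_mult_group G.m_assoc)
    also have "\<dots> = t \<otimes>\<^bsub>G\<^esub> a i \<otimes>\<^bsub>G\<^esub> inv\<^bsub>G\<^esub> t \<otimes>\<^bsub>G\<^esub> inv\<^bsub>G\<^esub> t"
      using less.prems \<sigma> a_rel[OF i less.prems(2)] by simp
    finally show ?thesis .
  qed
qed

lemma incl_alpha: "x \<in> carrier Fr \<Longrightarrow> incl (alpha x) = t \<otimes>\<^bsub>G\<^esub> incl x \<otimes>\<^bsub>G\<^esub> inv\<^bsub>G\<^esub> t"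
  using G.presented_group_hom_eq[OF hom_compose[OF alpha_hom incl_hom]
      hom_compose[OF incl_hom G.conjugation_hom[OF t_closed]], of x]
  by (simp add: pres_gen_eq_b alpha_b incl_alpha_gen incl_b G.m_assoc)

lemma incl_beta: "x \<in> carrier Fr \<Longrightarrow> incl (beta x) = inv\<^bsub>G\<^esub> t \<otimes>\<^bsub>G\<^esub> incl x \<otimes>\<^bsub>G\<^esub> t"
  using incl_alpha[of "beta x"] by (simp add: alpha_beta G.m_assoc)

lemma incl_aut_pow:
  "x \<in> carrier Fr \<Longrightarrow>
   incl (aut_pow alpha beta n x) = t [^]\<^bsub>G\<^esub> n \<otimes>\<^bsub>G\<^esub> incl x \<otimes>\<^bsub>G\<^esub> inv\<^bsub>G\<^esub> (t [^]\<^bsub>G\<^esub> n)"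
proof (induction n rule: int_induct[where k = 0])
  case (step1 n)
  have "t [^]\<^bsub>G\<^esub> (n + 1) = t \<otimes>\<^bsub>G\<^esub> t [^]\<^bsub>G\<^esub> n"
    using G.int_pow_mult[OF t_closed, of 1 n] by (simp add: add.commute)
  with step1 show ?case by (simp add: aut_pow_succ incl_alpha G.inv_mult_group G.m_assoc)
next
  case (step2 n)
  have "t [^]\<^bsub>G\<^esub> (n - 1) = inv\<^bsub>G\<^esub> t \<otimes>\<^bsub>G\<^esub> t [^]\<^bsub>G\<^esub> n"
    using G.int_pow_mult[OF t_closed, of "-1" n] G.int_pow_neg[OF t_closed, of 1] by simp
  with step2 show ?case by (simp add: aut_pow_pred incl_beta G.inv_mult_group G.m_assoc)
qed simp

sublocale S: group S
  by (rule group_int_semidirect)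

definition of_semidirect :: "word set \<times> int \<Rightarrow> word set" where
  "of_semidirect p = incl (fst p) \<otimes>\<^bsub>G\<^esub> t [^]\<^bsub>G\<^esub> snd p"

lemma of_semidirect_hom: "of_semidirect \<in> hom S G"
proof (rule homI)
  fix p q assume "p \<in> carrier S" "q \<in> carrier S"
  then obtain x n y n' where "p = (x, n)" "q = (y, n')" "x \<in> carrier Fr" "y \<in> carrier Fr"
    by (auto simp: int_semidirect_simps)
  then show "of_semidirect (p \<otimes>\<^bsub>S\<^esub> q) = of_semidirect p \<otimes>\<^bsub>G\<^esub> of_semidirect q"
    by (simp add: of_semidirect_def int_semidirect_simps incl_aut_pow G.int_pow_mult G.m_assoc)
qed (auto simp: of_semidirect_def int_semidirect_simps)

lemma semidirect_gen_rel:
  assumes "2 \<le> i" and "i \<le> m + k + 1"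
  shows "(b i, 1) \<otimes>\<^bsub>S\<^esub> (b (i - 1), 1) = (b (conj_target m i), 1) \<otimes>\<^bsub>S\<^esub> (b i, 1)"
proof -
  have \<sigma>: "1 \<le> conj_target m i" "conj_target m i \<le> m + k + 1"
    using conj_target_less[OF assms(1), of m] conj_target_pos[OF assms(1), of m] assms(2) by auto
  have "b i \<otimes>\<^bsub>Fr\<^esub> alpha_gen (i - 1) = b (conj_target m i) \<otimes>\<^bsub>Fr\<^esub> alpha_gen i"
    using assms \<sigma> by (simp add: alpha_gen_step Fr.m_assoc)
  then show ?thesis
    using assms \<sigma> by (simp add: int_semidirect_simps aut_pow_succ[of _ 0, simplified] alpha_b)
qed

definition to_semidirect :: "word set \<Rightarrow> word set \<times> int" where
  "to_semidirect = pres_lift S (G_gens m k) (G_rels m k) (\<lambda>i. (b i, 1))"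

lemma to_semidirect_hom: "to_semidirect \<in> hom G S"
  and to_semidirect_a: "1 \<le> i \<Longrightarrow> i \<le> m + k + 1 \<Longrightarrow> to_semidirect (a i) = (b i, 1)"
proof -
  have gens: "\<forall>i\<in>G_gens m k. (b i, 1) \<in> carrier S"
    by (simp add: int_semidirect_simps)
  moreover have "\<forall>r\<in>G_rels m k. eval_word S (G_gens m k) (\<lambda>i. (b i, 1)) r = \<one>\<^bsub>S\<^esub>"
    using semidirect_gen_rel by (subst S.G_rels_eval_one_iff[OF gens]) auto
  ultimately show "to_semidirect \<in> hom G S" "1 \<le> i \<Longrightarrow> i \<le> m + k + 1 \<Longrightarrow> to_semidirect (a i) = (b i, 1)"
    unfolding to_semidirect_def a_def by (auto intro: S.pres_lift_hom S.pres_lift_pres_gen)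
qed

lemma of_semidirect_to_semidirect: "g \<in> carrier G \<Longrightarrow> of_semidirect (to_semidirect g) = g"
  using G.presented_group_hom_eq[OF hom_compose[OF to_semidirect_hom of_semidirect_hom] id_hom, of g]
  by (simp add: a_def[symmetric] to_semidirect_a of_semidirect_def incl_b G.m_assoc)

lemma to_semidirect_incl: "x \<in> carrier Fr \<Longrightarrow> to_semidirect (incl x) = (x, 0)"
proof -
  interpret to_semidirect: group_hom G S to_semidirect
    by unfold_locales (rule to_semidirect_hom)
  have embed_hom: "(\<lambda>x. (x, 0)) \<in> hom Fr S"
    by (rule homI) (simp_all add: int_semidirect_simps)
  have "inv\<^bsub>S\<^esub> (\<one>\<^bsub>Fr\<^esub>, 1) = (\<one>\<^bsub>Fr\<^esub>, -1)"
    by (rule S.inv_equality) (simp_all add: int_semidirect_simps)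
  then have "to_semidirect (incl (b i)) = (b i, 0)" if "1 \<le> i" "i \<le> m + k + 1" for i
    using that by (simp add: incl_b to_semidirect_a int_semidirect_simps)
  then show "x \<in> carrier Fr \<Longrightarrow> ?thesis"
    using S.presented_group_hom_eq[OF hom_compose[OF incl_hom to_semidirect_hom] embed_hom, of x]
    by (simp add: pres_gen_eq_b)
qed

lemma kernel_iso_free: "G\<lparr>carrier := kernel G integer_group (snd \<circ> to_semidirect)\<rparr> \<cong> Fr"
proof (rule kernel_snd_iso[OF G.group_axioms to_semidirect_hom])
  show "inj_on to_semidirect (carrier G)"
    by (rule inj_on_inverseI[of _ of_semidirect]) (rule of_semidirect_to_semidirect)
  show "\<forall>x\<in>carrier Fr. \<exists>g\<in>carrier G. to_semidirect g = (x, 0)"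
    using to_semidirect_incl incl.hom_closed by blast
qed

end

theorem proposition5p3:
  fixes m k :: nat
  assumes "1 \<le> m" and "k \<le> m"
  shows "\<exists>\<phi>. \<phi> \<in> hom (G_mk m k) integer_group
            \<and> (\<forall>i \<in> G_gens m k. \<phi> (pres_gen (G_gens m k) (G_rels m k) i) = 1)
            \<and> \<phi> ` carrier (G_mk m k) = carrier integer_group
            \<and> (G_mk m k)\<lparr>carrier := kernel (G_mk m k) integer_group \<phi>\<rparr>
                 \<cong> free_group_rank (m + k)"
proof -
  interpret G_mk_splitting m k .
  have free: "free_group_rank (m + k) = Fr"
    by (simp add: free_group_rank_def F_gens_def)
  show ?thesis
    unfolding G_mk_def free
  proof (intro exI conjI)
    show "snd \<circ> to_semidirect \<in> hom G integer_group"
      by (rule hom_compose[OF to_semidirect_hom snd_hom])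
    show "\<forall>i\<in>G_gens m k. (snd \<circ> to_semidirect) (pres_gen (G_gens m k) (G_rels m k) i) = 1"
      using to_semidirect_a by (simp add: a_def)
    show "(snd \<circ> to_semidirect) ` carrier G = carrier integer_group"
      using to_semidirect_a[of 1] hom_compose[OF to_semidirect_hom snd_hom]
      by (intro hom_integer_group_onto[OF G.group_axioms _ t_closed]) simp_all
    show "G\<lparr>carrier := kernel G integer_group (snd \<circ> to_semidirect)\<rparr> \<cong> Fr"
      by (rule kernel_iso_free)
  qed
qed

end
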